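(* For each of the following tableaux $D$ (listed by rows) and vector spaces $W$, the map $\rho(D)$ defined below is nonzero: $D_1$ with rows $(1,1,1,2,2,3,3)$, $(2)$, $(3)$ and $\dim W=7$; $D_2$ with rows $(1,1,1,2,2,3,3,4)$, $(2,4,4)$, $(3)$ and $\dim W=8$; $D_3$ with rows $(1,1,1,2,2,3,3,4,4)$, $(2)$, $(3)$, $(4)$ and $\dim W=9$; $D_4$ with rows $(1,1,1,2,2,3,3,4,5)$, $(2,4,4,5)$, $(3,5)$ and $\dim W=9$.
   Context: $K$ is an algebraically closed field of characteristic zero. A numbering scheme $D$ is a Young tableau with $3d$ boxes filled with $1,\dots,d$, each number occurring exactly three times, weakly increasing along rows and strictly increasing down columns. Let its rows have lengths $\ell_1,\dots,\ell_r$ and let $e_{i,s}$ be the number of entries equal to $s$ in row $i$ (so $\sum_i e_{i,s}=3$). The map $\rho(D):\Lambda^{\ell_1}W\otimes\cdots\otimes\Lambda^{\ell_r}W\to S^d(\Lambda^3W)$ is the composition of: (a) for each $i$, the comultiplication $\Lambda^{\ell_i}W\to\Lambda^{e_{i,1}}W\otimes\cdots\otimes\Lambda^{e_{i,d}}W$; (b) after rearranging factors, for each $s$ the multiplication $\Lambda^{e_{1,s}}W\otimes\cdots\otimes\Lambda^{e_{r,s}}W\to\Lambda^3W$, tensored over $s=1,\dots,d$ to land in $(\Lambda^3W)^{\otimes d}$; (c) the symmetrization $(\Lambda^3W)^{\otimes d}\to S^d(\Lambda^3W)$. *)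

theory Defs
  imports "HOL-Computational_Algebra.Polynomial" "HOL-Library.Multiset"
begin

text \<open>Coordinates: W = K^n with basis e_0,...,e_(n-1). The exterior power
Lambda^l W has basis e_S for l-subsets S of {0..<n}; e_S is the wedge of the e_j, j in S,
in increasing order. S^d(Lambda^3 W) has basis the monomials, i.e. multisets of
d basis vectors e_B (B a 3-subset); an element is its coefficient function
on multisets. A numbering scheme is a list of rows, each row a list of entries in 1..d.\<close>

definition inv_count :: "nat set list \<Rightarrow> nat" where
  "inv_count As = card {(p,q,x,y). p < q \<and> q < length As \<and> x \<in> As!p \<and> y \<in> As!q \<and> y < x}"

text \<open>e_(A_1) wedge ... wedge e_(A_k) = wedge_sign [A_1..A_k] * e_(A_1 \<union> ... \<union> A_k)
  for pairwise disjoint A_i; the same sign is the coefficient of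
  e_(A_1) \<otimes> ... \<otimes> e_(A_k) in the comultiplication of e_(A_1 \<union> ... \<union> A_k).\<close>
definition wedge_sign :: "nat set list \<Rightarrow> 'a::comm_ring_1" where
  "wedge_sign As = (-1) ^ inv_count As"

definition pairwise_disj :: "nat set list \<Rightarrow> bool" where
  "pairwise_disj As \<longleftrightarrow> (\<forall>p<length As. \<forall>q<length As. p \<noteq> q \<longrightarrow> As!p \<inter> As!q = {})"

text \<open>Coefficient of the multiplication Lambda^(a_1) W \<otimes> ... \<otimes> Lambda^(a_k) W \<rightarrow> Lambda W on basis vectors.\<close>
definition wedge_coeff :: "nat set list \<Rightarrow> 'a::comm_ring_1" where
  "wedge_coeff As = (if pairwise_disj As then wedge_sign As else 0)"

text \<open>d = number of distinct entries (largest entry); e D i s = number of entries s in row i.\<close>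
definition ns_d :: "nat list list \<Rightarrow> nat" where
  "ns_d D = Max (set (concat D))"

definition ns_e :: "nat list list \<Rightarrow> nat \<Rightarrow> nat \<Rightarrow> nat" where
  "ns_e D i s = count_list (D!i) s"

text \<open>Terms of the comultiplications (step (a)): for each row i a decomposition of S_i into
  the ordered list of blocks As!i!s (s < d, block s corresponding to entry s+1) of sizes e_(i,s+1).\<close>
definition row_splits :: "nat list list \<Rightarrow> nat set list \<Rightarrow> nat set list list set" where
  "row_splits D Ss = {As. length As = length D \<and>
     (\<forall>i<length D. length (As!i) = ns_d D \<and>
        (\<forall>s<ns_d D. card (As!i!s) = ns_e D i (s+1)) \<and>
        pairwise_disj (As!i) \<and> \<Union> (set (As!i)) = Ss!i)}"

definition col :: "nat set list list \<Rightarrow> nat \<Rightarrow> nat set list" where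
  "col As s = map (\<lambda>i. As!i!s) [0..<length As]"

text \<open>rho(D) applied to the basis tensor e_(S_1) \<otimes> ... \<otimes> e_(S_r), as coefficient function on monomials.\<close>
definition rho_basis :: "nat list list \<Rightarrow> nat set list \<Rightarrow> nat set multiset \<Rightarrow> 'a::comm_ring_1" where
  "rho_basis D Ss M = (\<Sum>As\<in>row_splits D Ss.
      (\<Prod>i<length D. wedge_sign (As!i)) *
      (\<Prod>s<ns_d D. wedge_coeff (col As s)) *
      (if mset (map (\<lambda>s. \<Union> (set (col As s))) [0..<ns_d D]) = M then 1 else 0))"

text \<open>Basis of Lambda^(l_1) W \<otimes> ... \<otimes> Lambda^(l_r) W, W = K^n.\<close>
definition basis_tuples :: "nat list list \<Rightarrow> nat \<Rightarrow> nat set list set" where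
  "basis_tuples D n = {Ss. length Ss = length D \<and>
     (\<forall>i<length D. Ss!i \<subseteq> {0..<n} \<and> card (Ss!i) = length (D!i))}"

text \<open>rho(D) on an arbitrary element of the domain given by its coordinates c.\<close>
definition rho :: "nat list list \<Rightarrow> nat \<Rightarrow> (nat set list \<Rightarrow> 'a::comm_ring_1) \<Rightarrow> nat set multiset \<Rightarrow> 'a" where
  "rho D n c = (\<lambda>M. \<Sum>Ss\<in>basis_tuples D n. c Ss * rho_basis D Ss M)"

end

theory Submission
  imports Defs
begin

text \<open>Each map is shown to be nonzero by exhibiting one nonzero coefficient: applied to a suitable
  basis tensor, \<rho>(D) has coefficient 3, 2, 4, -4 respectively at a suitable monomial. Such a
  coefficient is a signed count of the terms of the comultiplications whose column products are
  nonzero and multiply to that monomial. In these terms the blocks of the lower rows are subsets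
  of the factors of the monomial and the blocks of the first row are then forced, so the terms can
  be enumerated and the signed count evaluated by rewriting.\<close>

definition split_monomial :: "nat list list \<Rightarrow> nat set list list \<Rightarrow> nat set multiset" where
  "split_monomial D As = mset (map (\<lambda>s. \<Union> (set (col As s))) [0..<ns_d D])"

definition split_term :: "nat list list \<Rightarrow> nat set multiset \<Rightarrow> nat set list list \<Rightarrow> 'a::comm_ring_1" where
  "split_term D M As = (\<Prod>i<length D. wedge_sign (As!i)) * (\<Prod>s<ns_d D. wedge_coeff (col As s)) *
      (if split_monomial D As = M then 1 else 0)"

definition contributes :: "nat list list \<Rightarrow> nat set list \<Rightarrow> nat set multiset \<Rightarrow> nat set list list \<Rightarrow> bool" where
  "contributes D Ss M As \<longleftrightarrow> As \<in> row_splits D Ss \<and> (\<forall>s<ns_d D. pairwise_disj (col As s)) \<and>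
      split_monomial D As = M"

lemma rho_basis_eq_sum_split_term: "rho_basis D Ss M = sum (split_term D M) (row_splits D Ss)"
  unfolding rho_basis_def split_term_def split_monomial_def ..

lemma col_eq_map: "col As s = map (\<lambda>R. R!s) As"
  unfolding col_def by (rule nth_equalityI) auto

lemma pairwise_disj_Cons: "pairwise_disj (A # As) \<Longrightarrow> A \<inter> \<Union> (set As) = {}"
  unfolding pairwise_disj_def by (fastforce simp: in_set_conv_nth)

lemma split_term_nonzero_imp_columns:
  assumes "split_term D M As \<noteq> (0::'a::comm_ring_1)"
  shows "(\<forall>s<ns_d D. pairwise_disj (col As s)) \<and> split_monomial D As = M"
proof (intro conjI allI impI)
  show "split_monomial D As = M"
    using assms unfolding split_term_def by (auto split: if_splits)
  fix s assume s: "s < ns_d D"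
  show "pairwise_disj (col As s)"
  proof (rule ccontr)
    assume "\<not> pairwise_disj (col As s)"
    then have "wedge_coeff (col As s) = (0::'a)" unfolding wedge_coeff_def by simp
    then have "(\<Prod>s<ns_d D. wedge_coeff (col As s)) = (0::'a)" using s by (intro prod_zero) auto
    with assms show False unfolding split_term_def by simp
  qed
qed

lemma finite_row_splits:
  assumes "\<forall>i<length D. finite (Ss!i)"
  shows "finite (row_splits D Ss)"
proof -
  define U where "U = (\<Union>i<length D. Ss!i)"
  define Rows where "Rows = {R. set R \<subseteq> Pow U \<and> length R = ns_d D}"
  have "row_splits D Ss \<subseteq> {As. set As \<subseteq> Rows \<and> length As = length D}"
    unfolding row_splits_def Rows_def U_def by (fastforce simp: in_set_conv_nth)
  moreover have "finite Rows"
    unfolding Rows_def U_def using assms by (intro finite_lists_length_eq) auto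
  then have "finite {As. set As \<subseteq> Rows \<and> length As = length D}"
    by (rule finite_lists_length_eq)
  ultimately show ?thesis by (rule finite_subset)
qed

definition subsets_of_card :: "nat set \<Rightarrow> nat \<Rightarrow> nat set list" where
  "subsets_of_card A e = filter (\<lambda>B. card B = e) (map set (subseqs (sorted_list_of_set A)))"

lemma set_subsets_of_card: "finite A \<Longrightarrow> set (subsets_of_card A e) = {B. B \<subseteq> A \<and> card B = e}"
  unfolding subsets_of_card_def using subseqs_powset[of "sorted_list_of_set A"] by auto

definition row_candidates :: "nat list list \<Rightarrow> nat set list \<Rightarrow> nat set list \<Rightarrow> nat \<Rightarrow> nat set list list" where
  "row_candidates D Ss Cs i =
     product_lists (map (\<lambda>s. subsets_of_card (Ss!i \<inter> Cs!s) (ns_e D i (s+1))) [0..<ns_d D])"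

definition lower_rows_candidates :: "nat list list \<Rightarrow> nat set list \<Rightarrow> nat set list \<Rightarrow> nat set list list list" where
  "lower_rows_candidates D Ss Cs = product_lists (map (row_candidates D Ss Cs) [1..<length D])"

definition first_row :: "nat \<Rightarrow> nat set list \<Rightarrow> nat set list list \<Rightarrow> nat set list" where
  "first_row d Cs T = map (\<lambda>s. Cs!s - \<Union> (set (map (\<lambda>R. R!s) T))) [0..<d]"

definition split_candidates ::
    "nat list list \<Rightarrow> nat set list \<Rightarrow> nat set multiset \<Rightarrow> nat set list \<Rightarrow> nat set list list list" where
  "split_candidates D Ss M Ml = concat (map (\<lambda>Cs. map (\<lambda>T. first_row (ns_d D) Cs T # T)
     (lower_rows_candidates D Ss Cs)) (filter (\<lambda>Cs. mset Cs = M) (List.n_lists (ns_d D) Ml)))"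

lemma first_row_eq:
  assumes "length R = d" and "\<forall>s<d. pairwise_disj (col (R # T) s)"
  shows "first_row d (map (\<lambda>s. \<Union> (set (col (R # T) s))) [0..<d]) T = R"
proof (rule nth_equalityI)
  show "length (first_row d (map (\<lambda>s. \<Union> (set (col (R # T) s))) [0..<d]) T) = length R"
    using assms(1) unfolding first_row_def by simp
  fix s assume "s < length (first_row d (map (\<lambda>s. \<Union> (set (col (R # T) s))) [0..<d]) T)"
  then have s: "s < d" unfolding first_row_def by simp
  have "R!s \<inter> \<Union> (set (map (\<lambda>X. X!s) T)) = {}"
    using pairwise_disj_Cons[of "R!s" "map (\<lambda>X. X!s) T"] assms(2) s by (simp add: col_eq_map)
  then show "first_row d (map (\<lambda>s. \<Union> (set (col (R # T) s))) [0..<d]) T ! s = R!s"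
    unfolding first_row_def using s by (auto simp: col_eq_map)
qed

lemma in_row_candidates:
  assumes "finite (Ss!i)" and "length R = ns_d D"
    and "\<forall>s<ns_d D. R!s \<subseteq> Ss!i \<inter> Cs!s \<and> card (R!s) = ns_e D i (s+1)"
  shows "R \<in> set (row_candidates D Ss Cs i)"
  unfolding row_candidates_def product_lists_set using assms
  by (auto simp: list_all2_conv_all_nth set_subsets_of_card)

lemma tl_in_lower_rows_candidates:
  assumes "length As = length D" and "\<forall>i<length D. As!i \<in> set (row_candidates D Ss Cs i)"
  shows "tl As \<in> set (lower_rows_candidates D Ss Cs)"
  unfolding lower_rows_candidates_def product_lists_set
  using assms by (auto simp: list_all2_conv_all_nth nth_tl)

lemma contributing_split_in_candidates:
  assumes "D \<noteq> []" and fin: "\<forall>i<length D. finite (Ss!i)" and Ml: "set_mset M \<subseteq> set Ml"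
    and "contributes D Ss M As"
  shows "As \<in> set (split_candidates D Ss M Ml)"
proof -
  let ?d = "ns_d D"
  define Cs where "Cs = map (\<lambda>s. \<Union> (set (col As s))) [0..<?d]"
  have rs: "As \<in> row_splits D Ss" and disj: "\<forall>s<?d. pairwise_disj (col As s)" and "mset Cs = M"
    using assms(4) unfolding contributes_def split_monomial_def Cs_def by auto
  have len: "length As = length D"
    and rows: "\<And>i. i < length D \<Longrightarrow> length (As!i) = ?d \<and> (\<forall>s<?d. card (As!i!s) = ns_e D i (s+1)) \<and>
       \<Union> (set (As!i)) = Ss!i"
    using rs unfolding row_splits_def by auto
  obtain R T where As: "As = R # T" using len assms(1) by (cases As) auto
  have "length Cs = ?d" and "set Cs = set_mset M"
    using \<open>mset Cs = M\<close> unfolding Cs_def by (simp, metis set_mset_mset)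
  then have Cs: "Cs \<in> set (List.n_lists ?d Ml)"
    using Ml unfolding set_n_lists by simp
  have block_sub: "As!i!s \<subseteq> Ss!i \<inter> Cs!s" if "i < length D" "s < ?d" for i s
  proof -
    have "As!i!s \<in> set (As!i)" using rows[OF that(1)] that(2) by simp
    then have "As!i!s \<subseteq> Ss!i" using rows[OF that(1)] by blast
    moreover have "As!i!s \<in> set (col As s)" using that(1) len by (simp add: col_eq_map)
    then have "As!i!s \<subseteq> Cs!s" using that(2) unfolding Cs_def by auto
    ultimately show ?thesis by blast
  qed
  have "T \<in> set (lower_rows_candidates D Ss Cs)"
    using tl_in_lower_rows_candidates[OF len] in_row_candidates block_sub rows fin As by force
  moreover have "first_row ?d Cs T = R"
    unfolding Cs_def As using first_row_eq rows[of 0] disj assms(1) As by auto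
  ultimately show ?thesis unfolding split_candidates_def using Cs \<open>mset Cs = M\<close> As by auto
qed

definition inversions :: "nat set list \<Rightarrow> nat" where
  "inversions As = (\<Sum>p<length As. \<Sum>q<length As.
     if p < q then card (Set.filter (\<lambda>(x, y). y < x) (As!p \<times> As!q)) else 0)"

lemma inv_count_eq_inversions:
  assumes "\<forall>A\<in>set As. finite A"
  shows "inv_count As = inversions As"
proof -
  define n where "n = length As"
  define P where "P = Set.filter (\<lambda>(p, q). p < q) ({..<n} \<times> {..<n})"
  define B where "B = (\<lambda>pq. Set.filter (\<lambda>(x::nat, y::nat). y < x) (As!fst pq \<times> As!snd pq))"
  define h where "h = (\<lambda>((p::nat, q::nat), (x::nat, y::nat)). (p, q, x, y))"
  have "{(p, q, x, y). p < q \<and> q < length As \<and> x \<in> As!p \<and> y \<in> As!q \<and> y < x} = h ` (SIGMA pq:P. B pq)"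
    unfolding h_def P_def B_def n_def by (auto simp: image_iff)
  moreover have "inj h" unfolding h_def by (auto simp: inj_def)
  then have "card (h ` (SIGMA pq:P. B pq)) = card (SIGMA pq:P. B pq)"
    by (rule card_image[OF inj_on_subset]) simp_all
  ultimately have "inv_count As = card (SIGMA pq:P. B pq)"
    unfolding inv_count_def by simp
  also have "\<dots> = (\<Sum>pq\<in>P. card (B pq))"
    using assms unfolding P_def B_def n_def by (intro card_SigmaI) auto
  also have "\<dots> = (\<Sum>pq\<in>{..<n} \<times> {..<n}. if fst pq < snd pq then card (B pq) else 0)"
    unfolding P_def by (subst sum.inter_filter[symmetric]) (auto simp: split_def)
  also have "\<dots> = inversions As"
    unfolding inversions_def n_def B_def by (simp add: sum.cartesian_product split_def)
  finally show ?thesis .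
qed

definition split_term_int :: "nat list list \<Rightarrow> nat set multiset \<Rightarrow> nat set list list \<Rightarrow> int" where
  "split_term_int D M As = (\<Prod>i<length D. (-1) ^ inversions (As!i)) *
      (\<Prod>s<ns_d D. if pairwise_disj (col As s) then (-1) ^ inversions (col As s) else 0) *
      (if split_monomial D As = M then 1 else 0)"

lemma split_term_eq_of_int:
  assumes "As \<in> row_splits D Ss" and fin: "\<forall>i<length D. finite (Ss!i)"
  shows "split_term D M As = of_int (split_term_int D M As)"
proof -
  have rows: "\<And>i. i < length D \<Longrightarrow> length (As!i) = ns_d D \<and> \<Union> (set (As!i)) = Ss!i"
    and len: "length As = length D"
    using assms(1) unfolding row_splits_def by auto
  have fin_blocks: "finite B" if "i < length D" "B \<in> set (As!i)" for i B
    using rows[OF that(1)] fin that by (metis Union_upper finite_subset)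
  have "inv_count (As!i) = inversions (As!i)" if "i < length D" for i
    using fin_blocks that by (intro inv_count_eq_inversions) auto
  moreover have "inv_count (col As s) = inversions (col As s)" if "s < ns_d D" for s
  proof (intro inv_count_eq_inversions ballI)
    fix B assume "B \<in> set (col As s)"
    then obtain i where "i < length D" "B = As!i!s" using len by (auto simp: col_eq_map in_set_conv_nth)
    then show "finite B" using fin_blocks rows that by (metis nth_mem)
  qed
  ultimately have "(\<Prod>i<length D. wedge_sign (As!i)) = (of_int (\<Prod>i<length D. (-1) ^ inversions (As!i)) :: 'a)"
    and "(\<Prod>s<ns_d D. wedge_coeff (col As s)) =
      (of_int (\<Prod>s<ns_d D. if pairwise_disj (col As s) then (-1) ^ inversions (col As s) else 0) :: 'a)"
    unfolding wedge_sign_def wedge_coeff_def of_int_prod by (auto intro: prod.cong)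
  then show ?thesis
    unfolding split_term_def split_term_int_def by simp
qed

definition rho_basis_enum :: "nat list list \<Rightarrow> nat set list \<Rightarrow> nat set multiset \<Rightarrow> nat set list \<Rightarrow> int" where
  "rho_basis_enum D Ss M Ml =
     sum_list (map (split_term_int D M) (remdups (filter (contributes D Ss M) (split_candidates D Ss M Ml))))"

lemma rho_basis_eq_enum:
  assumes "D \<noteq> []" and fin: "\<forall>i<length D. finite (Ss!i)" and "set_mset M \<subseteq> set Ml"
  shows "rho_basis D Ss M = of_int (rho_basis_enum D Ss M Ml)"
proof -
  define C where "C = set (filter (contributes D Ss M) (split_candidates D Ss M Ml))"
  have C_sub: "C \<subseteq> row_splits D Ss" unfolding C_def contributes_def by auto
  have "\<forall>As \<in> row_splits D Ss - C. split_term D M As = (0::'a)"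
  proof
    fix As assume As: "As \<in> row_splits D Ss - C"
    show "split_term D M As = (0::'a)"
    proof (rule ccontr)
      assume "split_term D M As \<noteq> (0::'a)"
      then have "contributes D Ss M As"
        using As split_term_nonzero_imp_columns unfolding contributes_def by blast
      then show False
        using As contributing_split_in_candidates[OF assms] unfolding C_def by simp
    qed
  qed
  then have "rho_basis D Ss M = (sum (split_term D M) C :: 'a)"
    unfolding rho_basis_eq_sum_split_term by (rule sum.mono_neutral_right[OF finite_row_splits[OF fin] C_sub])
  also have "\<dots> = sum (\<lambda>As. of_int (split_term_int D M As)) C"
    using C_sub split_term_eq_of_int[OF _ fin] by (intro sum.cong) auto
  also have "\<dots> = of_int (rho_basis_enum D Ss M Ml)"
    unfolding rho_basis_enum_def C_def by (simp add: sum_list_distinct_conv_sum_set of_int_sum)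
  finally show ?thesis .
qed

lemma finite_basis_tuples: "finite (basis_tuples D n)"
proof -
  have "basis_tuples D n \<subseteq> {Ss. set Ss \<subseteq> Pow {0..<n} \<and> length Ss = length D}"
    unfolding basis_tuples_def by (auto simp: in_set_conv_nth) (metis atLeastLessThan_iff subsetD)
  moreover have "finite {Ss. set Ss \<subseteq> Pow {0..<n} \<and> length Ss = length D}"
    by (rule finite_lists_length_eq) simp
  ultimately show ?thesis by (rule finite_subset)
qed

lemma rho_indicator:
  assumes "Ss \<in> basis_tuples D n"
  shows "rho D n (\<lambda>T. if T = Ss then 1 else 0) = rho_basis D Ss"
proof
  fix M
  have "rho D n (\<lambda>T. if T = Ss then 1 else 0) M = (\<Sum>T\<in>basis_tuples D n. if T = Ss then rho_basis D T M else 0)"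
    unfolding rho_def by (rule sum.cong) auto
  also have "\<dots> = rho_basis D Ss M" using assms finite_basis_tuples by (simp add: sum.delta')
  finally show "rho D n (\<lambda>T. if T = Ss then 1 else 0) M = rho_basis D Ss M" .
qed

lemma rho_nonzero_if_enum_nonzero:
  assumes "D \<noteq> []" and "Ss \<in> basis_tuples D n" and "set_mset M \<subseteq> set Ml"
    and "rho_basis_enum D Ss M Ml = k" and "k \<noteq> 0"
  shows "\<exists>c::nat set list \<Rightarrow> 'a::{comm_ring_1, ring_char_0}. rho D n c \<noteq> (\<lambda>_. 0)"
proof -
  have "\<forall>i<length D. finite (Ss!i)"
    using assms(2) unfolding basis_tuples_def by (auto intro: finite_subset)
  then have "rho_basis D Ss M = (of_int k :: 'a)"
    using rho_basis_eq_enum assms(1,3,4) by blast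
  then have "rho D n (\<lambda>T. if T = Ss then 1 else 0) M = (of_int k :: 'a)"
    using rho_indicator[OF assms(2)] by metis
  then show ?thesis using assms(5) by (metis of_int_eq_0_iff)
qed

lemmas rho_basis_enum_defs = rho_basis_enum_def split_term_int_def contributes_def split_monomial_def
  row_splits_def mem_Collect_eq split_candidates_def lower_rows_candidates_def row_candidates_def first_row_def
  subsets_of_card_def inversions_def pairwise_disj_def col_def ns_d_def ns_e_def

lemma rho_basis_enum_D1:
  "rho_basis_enum [[1,1,1,2,2,3,3],[2],[3]] [{0,1,2,3,4,5,6},{1},{5}]
     {#{0,1,2},{1,3,5},{4,5,6}#} [{0,1,2},{1,3,5},{4,5,6}] = 3"
  unfolding rho_basis_enum_defs by code_simp

lemma rho_basis_enum_D2:
  "rho_basis_enum [[1,1,1,2,2,3,3,4],[2,4,4],[3]] [{0,1,2,3,4,5,6,7},{0,5,6},{7}]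
     {#{0,1,2},{0,3,4},{5,6,7},{5,6,7}#} [{0,1,2},{0,3,4},{5,6,7}] = 2"
  unfolding rho_basis_enum_defs by code_simp

lemma rho_basis_enum_D3:
  "rho_basis_enum [[1,1,1,2,2,3,3,4,4],[2],[3],[4]] [{0,1,2,3,4,5,6,7,8},{4},{0},{1}]
     {#{0,1,2},{0,4,6},{1,7,8},{3,4,5}#} [{0,1,2},{0,4,6},{1,7,8},{3,4,5}] = 4"
  unfolding rho_basis_enum_defs by code_simp

lemma rho_basis_enum_D4:
  "rho_basis_enum [[1,1,1,2,2,3,3,4,5],[2,4,4,5],[3,5]] [{0,1,2,3,4,5,6,7,8},{2,4,6,7},{0,5}]
     {#{0,2,7},{0,2,7},{1,3,8},{4,5,6},{4,5,6}#} [{0,2,7},{1,3,8},{4,5,6}] = -4"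
  unfolding rho_basis_enum_defs by code_simp

theorem lemma5p3:
  assumes alg_closed: "\<forall>p::'a::field_char_0 poly. degree p \<ge> 1 \<longrightarrow> (\<exists>x. poly p x = 0)"
  shows "(\<exists>c::nat set list \<Rightarrow> 'a. rho [[1,1,1,2,2,3,3],[2],[3]] 7 c \<noteq> (\<lambda>_. 0)) \<and>
         (\<exists>c::nat set list \<Rightarrow> 'a. rho [[1,1,1,2,2,3,3,4],[2,4,4],[3]] 8 c \<noteq> (\<lambda>_. 0)) \<and>
         (\<exists>c::nat set list \<Rightarrow> 'a. rho [[1,1,1,2,2,3,3,4,4],[2],[3],[4]] 9 c \<noteq> (\<lambda>_. 0)) \<and>
         (\<exists>c::nat set list \<Rightarrow> 'a. rho [[1,1,1,2,2,3,3,4,5],[2,4,4,5],[3,5]] 9 c \<noteq> (\<lambda>_. 0))"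
proof (intro conjI)
  show "\<exists>c::nat set list \<Rightarrow> 'a. rho [[1,1,1,2,2,3,3],[2],[3]] 7 c \<noteq> (\<lambda>_. 0)"
    by (rule rho_nonzero_if_enum_nonzero[OF _ _ _ rho_basis_enum_D1])
      (simp_all add: basis_tuples_def less_Suc_eq)
  show "\<exists>c::nat set list \<Rightarrow> 'a. rho [[1,1,1,2,2,3,3,4],[2,4,4],[3]] 8 c \<noteq> (\<lambda>_. 0)"
    by (rule rho_nonzero_if_enum_nonzero[OF _ _ _ rho_basis_enum_D2])
      (simp_all add: basis_tuples_def less_Suc_eq)
  show "\<exists>c::nat set list \<Rightarrow> 'a. rho [[1,1,1,2,2,3,3,4,4],[2],[3],[4]] 9 c \<noteq> (\<lambda>_. 0)"
    by (rule rho_nonzero_if_enum_nonzero[OF _ _ _ rho_basis_enum_D3])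
      (simp_all add: basis_tuples_def less_Suc_eq)
  show "\<exists>c::nat set list \<Rightarrow> 'a. rho [[1,1,1,2,2,3,3,4,5],[2,4,4,5],[3,5]] 9 c \<noteq> (\<lambda>_. 0)"
    by (rule rho_nonzero_if_enum_nonzero[OF _ _ _ rho_basis_enum_D4])
      (simp_all add: basis_tuples_def less_Suc_eq)
qed

end
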